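(* Assume $f(\cdot,u_t)$ is a diffeomorphism of $\mathbb{R}^{\dim(s)}$ for every $t$. The online natural gradient in charts for the models $\mathfrak p_t$ on $\mathcal S$ in the charts $\Phi_t$, written on $s_t:=\Phi_t(\mathbf s^t)$ and the matrix $J_t$ of $\mathcal J_t$ in chart $\Phi_t$, is equivalent to $$s_{t|t-1}\leftarrow f(s_{t-1},u_t),\quad F_{t-1}\leftarrow\frac{\partial f(s_{t-1},u_t)}{\partial s_{t-1}},\quad \hat y_t\leftarrow h(s_{t|t-1},u_t),\quad J\leftarrow(F_{t-1}^{-1})^\top J_{t-1}F_{t-1}^{-1},$$ $$J_t\leftarrow(1-\gamma_t)J+\gamma_t\,\mathbb E_{y\sim p_{\mathrm{obs}}(\cdot\mid\hat y_t)}\Big[\Big(\frac{\partial\ln p_{\mathrm{obs}}(y\mid\hat y_t)}{\partial s_{t|t-1}}\Big)^{\otimes2}\Big],\qquad s_t\leftarrow s_{t|t-1}+\eta_tJ_t^{-1}\Big(\frac{\partial\ln p_{\mathrm{obs}}(y_t\mid\hat y_t)}{\partial s_{t|t-1}}\Big)^\top,$$ where derivatives with respect to $s_{t|t-1}$ are derivatives of $s\mapsto\ln p_{\mathrm{obs}}(y\mid h(s,u_t))$ at $s=s_{t|t-1}$.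
   Context: Conventions: Jacobian $\partial y/\partial x$ has $(i,j)$ entry $\partial f_i/\partial x_j$; gradients of real functions are row vectors; for a row vector $v$, $v^{\otimes2}=v^\top v$. Exponential family: $p_{\mathrm{obs}}(y\mid\hat y)$ denotes a family of densities $\frac{1}{Z(\beta)}\exp(\sum_k\beta_kT_k(y))\lambda(dy)$ (reference measure $\lambda$, linearly independent sufficient statistics $T$), parameterized by its mean parameter $\hat y=\mathbb{E}[T(y)]$. Dynamical system: states $s_t\in\mathbb{R}^{\dim(s)}$, inputs $u_t$, smooth $f$ with $s_t=f(s_{t-1},u_t)$; smooth $h$ with predictions $\hat y_t=h(s_t,u_t)$; observations $y_t\sim p_{\mathrm{obs}}(y\mid\hat y_t)$. $\mathcal S$ is the set of sequences $\mathbf{s}=(s_t)_{t\ge0}$ with $s_t=f(s_{t-1},u_t)$ for all $t\ge1$; $\Phi_t:\mathcal S\to\mathbb{R}^{\dim(s)}$, $\Phi_t(\mathbf{s})=s_t$; $\mathfrak{p}_t(y\mid\mathbf{s}):=p_{\mathrm{obs}}(y\mid h(\Phi_t(\mathbf{s}),u_t))$. Online natural gradient in charts: on a smooth manifold $\Theta$ with models $\mathfrak p_t(y\mid\vartheta)$ and charts $\Phi_t:\Theta\to\mathbb{R}^{\dim\Theta}$ (for a tensor $g$, $\mathbf{T}\Phi(g)$ is its coordinate expression in chart $\Phi$, and $\mathbf T_\vartheta\Phi^{-1}$ the inverse operation at $\vartheta$), the algorithm maintains $\vartheta_t\in\Theta$ and a $(0,2)$-tensor $\mathcal J_t$ at $\vartheta_t$,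 updated for $t\ge1$ with learning rate $\eta_t$ and decay rate $\gamma_t$ by: $\theta\leftarrow\Phi_t(\vartheta_{t-1})$, $J\leftarrow\mathbf T\Phi_t(\mathcal J_{t-1})$; $J_t\leftarrow(1-\gamma_t)J+\gamma_t\mathbf T\Phi_t\big(\mathbb E_{y\sim\mathfrak p_t(\cdot\mid\vartheta_{t-1})}[(\partial\ln\mathfrak p_t(y\mid\vartheta)/\partial\vartheta|_{\vartheta_{t-1}})^{\otimes2}]\big)$; $\theta_t\leftarrow\theta+\eta_tJ_t^{-1}\mathbf T\Phi_t(\partial\ln\mathfrak p_t(y_t\mid\vartheta)/\partial\vartheta|_{\vartheta_{t-1}})^\top$; $\vartheta_t\leftarrow\Phi_t^{-1}(\theta_t)$, $\mathcal J_t\leftarrow\mathbf T_{\vartheta_t}\Phi_t^{-1}(J_t)$. Here $\Theta=\mathcal S$ and $\vartheta_t=\mathbf s^t$. *)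

theory Defs
  imports "HOL-Analysis.Analysis"
begin

(* C^infinity real-valued functions on an open set of R^n: differentiable, and every
   partial derivative is again C^infinity (coinductively: derivatives of all orders exist). *)
coinductive Cinf_on :: "(real^'n) set \<Rightarrow> (real^'n \<Rightarrow> real) \<Rightarrow> bool" where
  "\<lbrakk> \<forall>x\<in>S. g differentiable (at x);
     \<forall>i. Cinf_on S (\<lambda>x. frechet_derivative g (at x) (axis i 1)) \<rbrakk> \<Longrightarrow> Cinf_on S g"

definition smooth_map :: "(real^'n) set \<Rightarrow> (real^'n \<Rightarrow> real^'m) \<Rightarrow> bool" where
  "smooth_map S g \<longleftrightarrow> (\<forall>j. Cinf_on S (\<lambda>x. g x $ j))"

definition diffeomorphism :: "(real^'n \<Rightarrow> real^'n) \<Rightarrow> bool" where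
  "diffeomorphism g \<longleftrightarrow> bij g \<and> smooth_map UNIV g \<and> smooth_map UNIV (inv g)"

(* gradient (as a vector of partial derivatives = the row vector, stored as real^'n) *)
definition grad :: "(real^'n \<Rightarrow> real) \<Rightarrow> real^'n \<Rightarrow> real^'n" where
  "grad g x = (\<chi> i. frechet_derivative g (at x) (axis i 1))"

(* Exponential family with reference measure M and linearly independent sufficient
   statistics T, parameterized by its mean parameter yhat ranging over the open set D:
   p y yhat = exp(beta . T y) / Z(beta) with E[T] = yhat. *)
definition expfam_mean ::
  "'y measure \<Rightarrow> ('y \<Rightarrow> real^'k) \<Rightarrow> (real^'k) set \<Rightarrow> ('y \<Rightarrow> real^'k \<Rightarrow> real) \<Rightarrow> bool" where
  "expfam_mean M T D p \<longleftrightarrow>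
     T \<in> borel_measurable M \<and>
     (\<forall>c. (\<forall>y\<in>space M. c \<bullet> T y = 0) \<longrightarrow> c = 0) \<and>
     (\<forall>yh\<in>D. \<exists>\<beta>. integrable M (\<lambda>y. exp (\<beta> \<bullet> T y)) \<and>
        (\<integral>y. exp (\<beta> \<bullet> T y) \<partial>M) > 0 \<and>
        (\<forall>y\<in>space M. p y yh = exp (\<beta> \<bullet> T y) / (\<integral>y. exp (\<beta> \<bullet> T y) \<partial>M)) \<and>
        integrable M (\<lambda>y. p y yh *\<^sub>R T y) \<and>
        (\<integral>y. p y yh *\<^sub>R T y \<partial>M) = yh)"

definition traj_set :: "(real^'n \<Rightarrow> 'u \<Rightarrow> real^'n) \<Rightarrow> (nat \<Rightarrow> 'u) \<Rightarrow> (nat \<Rightarrow> real^'n) set" where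
  "traj_set f u = {\<sigma>. \<forall>t\<ge>1. \<sigma> t = f (\<sigma> (t - 1)) (u t)}"

(* chart Phi_t(sigma) = sigma t; its inverse *)
definition chart_inv :: "(real^'n \<Rightarrow> 'u \<Rightarrow> real^'n) \<Rightarrow> (nat \<Rightarrow> 'u) \<Rightarrow> nat \<Rightarrow> real^'n \<Rightarrow> (nat \<Rightarrow> real^'n)" where
  "chart_inv f u t x = (THE \<sigma>. \<sigma> \<in> traj_set f u \<and> \<sigma> t = x)"

(* Tangent vectors of S at theta are represented by sequences v with v k = T Phi_k (v).
   tlift = T_{theta} Phi_t^{-1} applied to a coordinate vector w in chart Phi_t. *)
definition tlift :: "(real^'n \<Rightarrow> 'u \<Rightarrow> real^'n) \<Rightarrow> (nat \<Rightarrow> 'u) \<Rightarrow> (nat \<Rightarrow> real^'n) \<Rightarrow> nat \<Rightarrow> real^'n \<Rightarrow> (nat \<Rightarrow> real^'n)" where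
  "tlift f u \<theta> t w = (\<lambda>k. frechet_derivative (\<lambda>x. chart_inv f u t x k) (at (\<theta> t)) w)"

(* differential at theta of a real function g on S (smooth structure from the compatible
   charts Phi_k; computed in chart Phi_0), applied to a tangent vector v *)
definition mdiff :: "(real^'n \<Rightarrow> 'u \<Rightarrow> real^'n) \<Rightarrow> (nat \<Rightarrow> 'u) \<Rightarrow> ((nat \<Rightarrow> real^'n) \<Rightarrow> real) \<Rightarrow> (nat \<Rightarrow> real^'n) \<Rightarrow> (nat \<Rightarrow> real^'n) \<Rightarrow> real" where
  "mdiff f u g \<theta> v = frechet_derivative (\<lambda>x. g (chart_inv f u 0 x)) (at (\<theta> 0)) (v 0)"

definition chart_covec :: "(real^'n \<Rightarrow> 'u \<Rightarrow> real^'n) \<Rightarrow> (nat \<Rightarrow> 'u) \<Rightarrow> nat \<Rightarrow> (nat \<Rightarrow> real^'n) \<Rightarrow> ((nat \<Rightarrow> real^'n) \<Rightarrow> real) \<Rightarrow> real^'n" where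
  "chart_covec f u t \<theta> L = (\<chi> i. L (tlift f u \<theta> t (axis i 1)))"

definition chart_tensor :: "(real^'n \<Rightarrow> 'u \<Rightarrow> real^'n) \<Rightarrow> (nat \<Rightarrow> 'u) \<Rightarrow> nat \<Rightarrow> (nat \<Rightarrow> real^'n) \<Rightarrow> ((nat \<Rightarrow> real^'n) \<Rightarrow> (nat \<Rightarrow> real^'n) \<Rightarrow> real) \<Rightarrow> real^'n^'n" where
  "chart_tensor f u t \<theta> G = (\<chi> i j. G (tlift f u \<theta> t (axis i 1)) (tlift f u \<theta> t (axis j 1)))"

(* T Phi_t^{-1}: the (0,2)-tensor whose matrix in chart Phi_t is J *)
definition tensor_of_chart :: "nat \<Rightarrow> real^'n^'n \<Rightarrow> ((nat \<Rightarrow> real^'n) \<Rightarrow> (nat \<Rightarrow> real^'n) \<Rightarrow> real)" where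
  "tensor_of_chart t J = (\<lambda>v w. v t \<bullet> (J *v w t))"

definition is_tensor_at :: "(real^'n \<Rightarrow> 'u \<Rightarrow> real^'n) \<Rightarrow> (nat \<Rightarrow> 'u) \<Rightarrow> (nat \<Rightarrow> real^'n) \<Rightarrow> ((nat \<Rightarrow> real^'n) \<Rightarrow> (nat \<Rightarrow> real^'n) \<Rightarrow> real) \<Rightarrow> bool" where
  "is_tensor_at f u \<theta> G \<longleftrightarrow> bilinear (\<lambda>a b. G (tlift f u \<theta> 0 a) (tlift f u \<theta> 0 b))"

end

theory Submission imports Defs begin

text \<open>
The charts \<open>\<Phi>\<^sub>t\<close> identify the trajectory manifold with \<open>\<real>\<^sup>n\<close>, and the chart change
\<open>\<Phi>\<^sub>t \<circ> \<Phi>\<^sub>t\<^sub>-\<^sub>1\<inverse>\<close> is \<open>f(\<cdot>, u\<^sub>t)\<close>. By the chain rule, lifting a coordinate vector \<open>w\<close>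
through chart \<open>t\<close> is lifting \<open>F\<inverse> w\<close> through chart \<open>t - 1\<close>, so the matrix of a (0,2)-tensor
transforms as \<open>J \<mapsto> F\<^sup>-\<^sup>T J F\<inverse>\<close>. The differential of \<open>\<sigma> \<mapsto> ln p\<^sub>o\<^sub>b\<^sub>s(y | h(\<sigma>\<^sub>t, u\<^sub>t))\<close>, read in
chart \<open>t\<close>, is the Euclidean gradient of \<open>s \<mapsto> ln p\<^sub>o\<^sub>b\<^sub>s(y | h(s, u\<^sub>t))\<close> at
\<open>\<sigma>\<^sub>t = f(\<sigma>\<^sub>t\<^sub>-\<^sub>1, u\<^sub>t)\<close>; this turns the Fisher tensor and the score into the stated matrices.
Finally \<open>\<Phi>\<^sub>t(\<Phi>\<^sub>t\<inverse> \<theta>) = \<theta>\<close> reads off the new state.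
\<close>

lemma matrix_inv_eq_left_inverse:
  fixes A B :: "real^'n^'n"
  assumes "B ** A = mat 1"
  shows "matrix_inv A = B"
proof -
  have "A ** B = mat 1" using assms matrix_left_right_inverse by blast
  have inv: "A ** matrix_inv A = mat 1 \<and> matrix_inv A ** A = mat 1"
    unfolding matrix_inv_def by (rule someI[of _ B]) (use assms \<open>A ** B = mat 1\<close> in auto)
  have "matrix_inv A = (B ** A) ** matrix_inv A" using assms by simp
  also have "\<dots> = B ** (A ** matrix_inv A)" by (simp add: matrix_mul_assoc)
  also have "\<dots> = B" using inv by simp
  finally show ?thesis .
qed

lemma bilinear_matrix_change_of_basis:
  fixes P :: "real^'n^'n"
  assumes B: "bilinear B"
  shows "(\<chi> i j. B (P *v axis i 1) (P *v axis j 1))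
         = transpose P ** (\<chi> a b. B (axis a 1) (axis b 1)) ** P"
proof -
  have col: "P *v axis i 1 = (\<Sum>a\<in>UNIV. P $ a $ i *\<^sub>R axis a 1)" for i
  proof -
    have "P *v axis i 1 = (\<Sum>a\<in>UNIV. (P *v axis i 1) $ a *s axis a 1)"
      by (rule basis_expansion[symmetric])
    then show ?thesis by (simp add: matrix_vector_mult_basis column_def scalar_mult_eq_scaleR)
  qed
  have "B (P *v axis i 1) (P *v axis j 1)
        = (\<Sum>(a,b)\<in>UNIV \<times> UNIV. B (P $ a $ i *\<^sub>R axis a 1) (P $ b $ j *\<^sub>R axis b 1))" for i j
    unfolding col by (rule bilinear_sum[OF B])
  also have "\<dots> i j = (\<Sum>(a,b)\<in>UNIV \<times> UNIV. P $ a $ i * P $ b $ j * B (axis a 1) (axis b 1))" for i j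
    by (rule sum.cong) (auto simp: bilinear_lmul[OF B] bilinear_rmul[OF B])
  also have "\<dots> i j = (\<Sum>a\<in>UNIV. \<Sum>b\<in>UNIV. P $ a $ i * P $ b $ j * B (axis a 1) (axis b 1))" for i j
    by (rule sum.cartesian_product[symmetric])
  also have "\<dots> i j = (\<Sum>b\<in>UNIV. (\<Sum>a\<in>UNIV. P $ a $ i * B (axis a 1) (axis b 1)) * P $ b $ j)" for i j
    by (subst sum.swap) (simp add: sum_distrib_right sum_distrib_left mult_ac)
  finally show ?thesis by (simp add: vec_eq_iff matrix_matrix_mult_def transpose_def)
qed

lemma differentiable_if_Cinf_on: "Cinf_on S g \<Longrightarrow> x \<in> S \<Longrightarrow> g differentiable at x"
  by (erule Cinf_on.cases) auto

lemma differentiable_if_smooth_map: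
  fixes g :: "real^'n \<Rightarrow> real^'m"
  assumes "smooth_map UNIV g"
  shows "g differentiable at x"
proof -
  have "(\<lambda>x. g x \<bullet> axis j 1) differentiable at x" for j
    using assms unfolding smooth_map_def inner_axis by (auto intro: differentiable_if_Cinf_on)
  then show ?thesis
    by (intro differentiable_componentwise_within[THEN iffD2]) (auto simp: Basis_vec_def)
qed

lemma expfam_mean_pos:
  assumes "expfam_mean M T D p" "yh \<in> D" "yy \<in> space M"
  shows "p yy yh > 0"
proof -
  obtain \<beta> where "(\<integral>y. exp (\<beta> \<bullet> T y) \<partial>M) > 0"
     "\<forall>y\<in>space M. p y yh = exp (\<beta> \<bullet> T y) / (\<integral>y. exp (\<beta> \<bullet> T y) \<partial>M)"
    using assms(1,2) unfolding expfam_mean_def by blast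
  then show ?thesis using assms(3) by simp
qed

lemma differentiable_ln_expfam_comp:
  fixes g :: "real^'n \<Rightarrow> real^'k"
  assumes "expfam_mean M T D p" "Cinf_on D (p yy)" "yy \<in> space M"
    and "smooth_map UNIV g" "\<And>x. g x \<in> D"
  shows "(\<lambda>x. ln (p yy (g x))) differentiable at x"
proof -
  have "(p yy \<circ> g) differentiable at x"
    using assms by (intro differentiable_chain_at differentiable_if_smooth_map differentiable_if_Cinf_on)
  then obtain D' where "((\<lambda>x. p yy (g x)) has_derivative D') (at x)"
    by (auto simp: differentiable_def o_def)
  from has_derivative_ln[OF expfam_mean_pos[OF assms(1) assms(5) assms(3)] this]
  show ?thesis by (auto simp: differentiable_def)
qed

text \<open>\<open>state_jacobian f u t x\<close> is the paper's \<open>F\<^sub>t\<^sub>-\<^sub>1\<close> when \<open>x = s\<^sub>t\<^sub>-\<^sub>1\<close>.\<close>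

definition state_jacobian :: "(real^'n \<Rightarrow> 'u \<Rightarrow> real^'n) \<Rightarrow> (nat \<Rightarrow> 'u) \<Rightarrow> nat \<Rightarrow> real^'n \<Rightarrow> real^'n^'n" where
  "state_jacobian f u t x = matrix (frechet_derivative (\<lambda>s. f s (u t)) (at x))"

lemma traj_step:
  assumes "\<sigma> \<in> traj_set f u"
  shows "\<sigma> (Suc t) = f (\<sigma> t) (u (Suc t))"
proof -
  have "\<forall>t\<ge>1. \<sigma> t = f (\<sigma> (t - 1)) (u t)" using assms by (simp add: traj_set_def)
  then show ?thesis by (metis diff_Suc_1 le_add1 plus_1_eq_Suc)
qed

lemma chart_tensor_fisher:
  assumes "\<And>yy. yy \<in> space M \<Longrightarrow> chart_covec f u t \<theta> (L yy) = c yy"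
  shows "chart_tensor f u t \<theta> (\<lambda>v w. \<integral>yy. L yy v * L yy w * \<rho> yy \<partial>M)
         = (\<chi> i j. \<integral>yy. (c yy $ i * c yy $ j) * \<rho> yy \<partial>M)"
proof -
  have "L yy (tlift f u \<theta> t (axis i 1)) = c yy $ i" if "yy \<in> space M" for yy i
    using assms[OF that] unfolding chart_covec_def by (metis vec_lambda_beta)
  then show ?thesis
    unfolding chart_tensor_def by (simp add: vec_eq_iff cong: Bochner_Integration.integral_cong)
qed

locale invertible_dynamics =
  fixes f :: "real^'n \<Rightarrow> 'u \<Rightarrow> real^'n" and u :: "nat \<Rightarrow> 'u"
  assumes bij_f: "\<And>t. bij (\<lambda>s. f s (u t))"
    and differentiable_f: "\<And>t x. (\<lambda>s. f s (u t)) differentiable at x"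
    and differentiable_inv_f: "\<And>t x. inv (\<lambda>s. f s (u t)) differentiable at x"

lemma invertible_dynamics_if_diffeomorphism:
  assumes "\<And>t. diffeomorphism (\<lambda>s. f s (u t))"
  shows "invertible_dynamics f u"
  using assms unfolding diffeomorphism_def
  by unfold_locales (blast intro: differentiable_if_smooth_map)+

context invertible_dynamics
begin

lemma f_of_inv_f [simp]: "f (inv (\<lambda>s. f s (u t)) x) (u t) = x"
  using surj_f_inv_f[OF bij_is_surj[OF bij_f]] by simp

lemma inv_f_of_f [simp]: "inv (\<lambda>s. f s (u t)) (f x (u t)) = x"
  using inv_f_f[OF bij_is_inj[OF bij_f]] by simp

lemma traj_set_eqI:
  assumes \<sigma>: "\<sigma> \<in> traj_set f u" and \<tau>: "\<tau> \<in> traj_set f u" and "\<sigma> t = \<tau> t"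
  shows "\<sigma> = \<tau>"
proof -
  have "\<sigma> (Suc n) = \<tau> (Suc n) \<longleftrightarrow> \<sigma> n = \<tau> n" for n
    by (metis traj_step[OF \<sigma>] traj_step[OF \<tau>] inv_f_of_f)
  then have "\<sigma> n = \<tau> n \<longleftrightarrow> \<sigma> 0 = \<tau> 0" for n
    by (induction n) simp_all
  then show ?thesis using \<open>\<sigma> t = \<tau> t\<close> by blast
qed

lemma traj_set_through: "\<exists>\<sigma>\<in>traj_set f u. \<sigma> t = x"
proof (induction t arbitrary: x)
  case 0
  define \<sigma> where "\<sigma> = rec_nat x (\<lambda>k s. f s (u (Suc k)))"
  have "\<sigma> t = f (\<sigma> (t - 1)) (u t)" if "t \<ge> 1" for t
    using that by (cases t) (simp_all add: \<sigma>_def)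
  then have "\<sigma> \<in> traj_set f u" by (simp add: traj_set_def)
  moreover have "\<sigma> 0 = x" by (simp add: \<sigma>_def)
  ultimately show ?case by blast
next
  case (Suc t)
  then obtain \<sigma> where "\<sigma> \<in> traj_set f u" "\<sigma> t = inv (\<lambda>s. f s (u (Suc t))) x"
    by blast
  then show ?case by (metis traj_step f_of_inv_f)
qed

lemma chart_inv_in_traj_set: "chart_inv f u t x \<in> traj_set f u"
  and chart_inv_at [simp]: "chart_inv f u t x t = x"
proof -
  have "\<exists>!\<sigma>. \<sigma> \<in> traj_set f u \<and> \<sigma> t = x"
    using traj_set_through[of t x] traj_set_eqI by blast
  then have "chart_inv f u t x \<in> traj_set f u \<and> chart_inv f u t x t = x"
    unfolding chart_inv_def by (rule theI')
  then show "chart_inv f u t x \<in> traj_set f u" "chart_inv f u t x t = x" by simp_all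
qed

lemma chart_inv_of_traj:
  assumes "\<sigma> \<in> traj_set f u"
  shows "chart_inv f u t (\<sigma> t) = \<sigma>"
  using traj_set_eqI[OF chart_inv_in_traj_set assms, of t "\<sigma> t" t] by simp

lemma chart_inv_Suc: "chart_inv f u (Suc t) x = chart_inv f u t (inv (\<lambda>s. f s (u (Suc t))) x)"
proof -
  let ?\<sigma> = "chart_inv f u (Suc t) x"
  have "f (?\<sigma> t) (u (Suc t)) = x"
    using traj_step[OF chart_inv_in_traj_set, of "Suc t" x t] by simp
  then have "?\<sigma> t = inv (\<lambda>s. f s (u (Suc t))) x" by (metis inv_f_of_f)
  then show ?thesis using chart_inv_of_traj[OF chart_inv_in_traj_set, of t "Suc t" x] by simp
qed

lemma differentiable_chart_inv_from_0: "(\<lambda>x. chart_inv f u 0 x k) differentiable at z"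
proof (induction k arbitrary: z)
  case 0
  then show ?case by simp
next
  case (Suc k)
  have "(\<lambda>x. chart_inv f u 0 x (Suc k)) = (\<lambda>s. f s (u (Suc k))) \<circ> (\<lambda>x. chart_inv f u 0 x k)"
    using traj_step[OF chart_inv_in_traj_set] by (simp add: fun_eq_iff)
  then show ?case using Suc differentiable_f by (simp add: differentiable_chain_at)
qed

lemma differentiable_chart_inv_to_0: "(\<lambda>x. chart_inv f u t x 0) differentiable at z"
proof (induction t arbitrary: z)
  case 0
  then show ?case by simp
next
  case (Suc t)
  have "(\<lambda>x. chart_inv f u (Suc t) x 0) = (\<lambda>x. chart_inv f u t x 0) \<circ> inv (\<lambda>s. f s (u (Suc t)))"
    by (simp add: chart_inv_Suc fun_eq_iff)
  then show ?case using Suc differentiable_inv_f by (simp add: differentiable_chain_at)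
qed

lemma differentiable_chart_inv: "(\<lambda>x. chart_inv f u t x k) differentiable at z"
proof -
  have "(\<lambda>x. chart_inv f u t x k) = (\<lambda>x. chart_inv f u 0 x k) \<circ> (\<lambda>x. chart_inv f u t x 0)"
    using chart_inv_of_traj[OF chart_inv_in_traj_set, of 0] by (simp add: fun_eq_iff)
  then show ?thesis
    using differentiable_chain_at[OF differentiable_chart_inv_to_0 differentiable_chart_inv_from_0] by simp
qed

lemma frechet_derivative_inv_f:
  "frechet_derivative (inv (\<lambda>s. f s (u t))) (at (f a (u t))) w = matrix_inv (state_jacobian f u t a) *v w"
proof -
  let ?F = "\<lambda>s. f s (u t)"
  let ?DF = "frechet_derivative ?F (at a)"
  let ?DI = "frechet_derivative (inv ?F) (at (?F a))"
  have "?DI \<circ> ?DF = frechet_derivative (inv ?F \<circ> ?F) (at a)"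
    by (rule frechet_derivative_compose[OF differentiable_f differentiable_inv_f, symmetric])
  also have "inv ?F \<circ> ?F = id" by (simp add: fun_eq_iff)
  finally have "?DI \<circ> ?DF = id" by (simp add: comp_def id_def)
  moreover have "linear ?DF" "linear ?DI"
    by (rule linear_frechet_derivative[OF differentiable_f] linear_frechet_derivative[OF differentiable_inv_f])+
  ultimately have "matrix ?DI ** matrix ?DF = mat 1"
    by (metis matrix_compose matrix_id_mat_1)
  then have "matrix_inv (state_jacobian f u t a) = matrix ?DI"
    unfolding state_jacobian_def by (rule matrix_inv_eq_left_inverse)
  then show ?thesis using fun_cong[OF matrix_vector_mul(2)[OF \<open>linear ?DI\<close>], of w] by simp
qed

lemma tlift_at_self [simp]: "tlift f u \<sigma> t w t = w"
  unfolding tlift_def by simp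

lemma tlift_Suc:
  assumes \<sigma>: "\<sigma> \<in> traj_set f u"
  shows "tlift f u \<sigma> (Suc t) w = tlift f u \<sigma> t (matrix_inv (state_jacobian f u (Suc t) (\<sigma> t)) *v w)"
proof
  fix k
  let ?I = "inv (\<lambda>s. f s (u (Suc t)))"
  have "(\<lambda>x. chart_inv f u (Suc t) x k) = (\<lambda>z. chart_inv f u t z k) \<circ> ?I"
    by (simp add: chart_inv_Suc fun_eq_iff)
  moreover have "frechet_derivative ((\<lambda>z. chart_inv f u t z k) \<circ> ?I) (at (\<sigma> (Suc t)))
      = frechet_derivative (\<lambda>z. chart_inv f u t z k) (at (?I (\<sigma> (Suc t))))
        \<circ> frechet_derivative ?I (at (\<sigma> (Suc t)))"
    by (rule frechet_derivative_compose[OF differentiable_inv_f differentiable_chart_inv])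
  ultimately show "tlift f u \<sigma> (Suc t) w k
      = tlift f u \<sigma> t (matrix_inv (state_jacobian f u (Suc t) (\<sigma> t)) *v w) k"
    unfolding tlift_def traj_step[OF \<sigma>] by (simp add: frechet_derivative_inv_f)
qed

lemma chart_tensor_Suc:
  assumes \<sigma>: "\<sigma> \<in> traj_set f u" and G: "bilinear (\<lambda>a b. G (tlift f u \<sigma> t a) (tlift f u \<sigma> t b))"
  shows "chart_tensor f u (Suc t) \<sigma> G
         = transpose (matrix_inv (state_jacobian f u (Suc t) (\<sigma> t))) ** chart_tensor f u t \<sigma> G
           ** matrix_inv (state_jacobian f u (Suc t) (\<sigma> t))"
  unfolding chart_tensor_def tlift_Suc[OF \<sigma>] by (rule bilinear_matrix_change_of_basis[OF G])

lemma chart_tensor_of_chart [simp]: "chart_tensor f u t \<sigma> (tensor_of_chart t J) = J"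
  by (simp add: chart_tensor_def tensor_of_chart_def vec_eq_iff inner_axis' matrix_vector_mult_basis column_def)

lemma bilinear_tensor_of_chart: "bilinear (\<lambda>a b. tensor_of_chart t J (tlift f u \<sigma> t a) (tlift f u \<sigma> t b))"
  by (simp add: tensor_of_chart_def bilinear_def linear_iff inner_add_left inner_add_right
      matrix_vector_right_distrib matrix_vector_mult_scaleR)

lemma chart_covec_mdiff:
  assumes \<theta>: "\<theta> \<in> traj_set f u" and q: "\<And>x. q differentiable at x"
  shows "chart_covec f u t \<theta> (mdiff f u (\<lambda>\<sigma>. q (\<sigma> t)) \<theta>) = grad q (\<theta> t)"
proof -
  \<comment> \<open>\<open>mdiff\<close> differentiates in chart 0, so pass through the chart change \<open>\<Phi>\<^sub>0 \<circ> \<Phi>\<^sub>t\<inverse>\<close>\<close>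
  let ?G = "\<lambda>x. q (chart_inv f u 0 x t)"
  let ?P = "\<lambda>x. chart_inv f u t x 0"
  have "?G \<circ> ?P = q"
    using chart_inv_of_traj[OF chart_inv_in_traj_set, of 0] by (simp add: fun_eq_iff)
  moreover have "?P (\<theta> t) = \<theta> 0" by (simp add: chart_inv_of_traj[OF \<theta>])
  moreover have "?G differentiable at z" for z
    using differentiable_chain_at[OF differentiable_chart_inv q] by (simp add: o_def)
  then have "frechet_derivative (?G \<circ> ?P) (at (\<theta> t))
      = frechet_derivative ?G (at (?P (\<theta> t))) \<circ> frechet_derivative ?P (at (\<theta> t))"
    by (rule frechet_derivative_compose[OF differentiable_chart_inv])
  ultimately show ?thesis
    unfolding chart_covec_def mdiff_def grad_def tlift_def by simp
qed

end

theorem corollary9: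
  fixes f :: "real^'n \<Rightarrow> 'u \<Rightarrow> real^'n"
    and u :: "nat \<Rightarrow> 'u"
    and h :: "real^'n \<Rightarrow> 'u \<Rightarrow> real^'k"
    and M :: "'y measure" and T :: "'y \<Rightarrow> real^'k" and D :: "(real^'k) set"
    and p_obs :: "'y \<Rightarrow> real^'k \<Rightarrow> real"
    and y :: "nat \<Rightarrow> 'y"
    and \<eta> \<gamma> :: "nat \<Rightarrow> real"
    and vth :: "nat \<Rightarrow> (nat \<Rightarrow> real^'n)"
    and Jt_seq :: "nat \<Rightarrow> ((nat \<Rightarrow> real^'n) \<Rightarrow> (nat \<Rightarrow> real^'n) \<Rightarrow> real)"
  assumes diffeo: "\<And>t. diffeomorphism (\<lambda>s. f s (u t))"
    and h_smooth: "\<And>t. smooth_map UNIV (\<lambda>s. h s (u t))"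
    and h_range: "\<And>s t. h s (u t) \<in> D"
    and D_open: "open D"
    and expfam: "expfam_mean M T D p_obs"
    and p_smooth: "\<And>yy. yy \<in> space M \<Longrightarrow> Cinf_on D (p_obs yy)"
    and obs: "\<And>t. y t \<in> space M"
    and init_pt: "vth 0 \<in> traj_set f u"
    and init_tensor: "is_tensor_at f u (vth 0) (Jt_seq 0)"
    and step: "\<And>t. t \<ge> 1 \<Longrightarrow>
      (let \<theta> = vth (t - 1) t;
           J = chart_tensor f u t (vth (t - 1)) (Jt_seq (t - 1));
           dl = (\<lambda>yy. mdiff f u (\<lambda>\<sigma>. ln (p_obs yy (h (\<sigma> t) (u t)))) (vth (t - 1)));
           Fish = (\<lambda>v w. \<integral>yy. dl yy v * dl yy w * p_obs yy (h (vth (t - 1) t) (u t)) \<partial>M);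
           Jt = (1 - \<gamma> t) *\<^sub>R J + \<gamma> t *\<^sub>R chart_tensor f u t (vth (t - 1)) Fish;
           \<theta>t = \<theta> + \<eta> t *\<^sub>R (matrix_inv Jt *v chart_covec f u t (vth (t - 1)) (dl (y t)))
       in vth t = chart_inv f u t \<theta>t \<and> Jt_seq t = tensor_of_chart t Jt)"
  shows "\<forall>t\<ge>1.
      (let s = (\<lambda>k. vth k k);
           Jm = (\<lambda>k. chart_tensor f u k (vth k) (Jt_seq k));
           s_pred = f (s (t - 1)) (u t);
           F = matrix (frechet_derivative (\<lambda>x. f x (u t)) (at (s (t - 1))));
           yhat = h s_pred (u t);
           g = (\<lambda>yy. grad (\<lambda>x. ln (p_obs yy (h x (u t)))) s_pred);
           J = transpose (matrix_inv F) ** Jm (t - 1) ** matrix_inv F;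
           Fish = (\<chi> i j. \<integral>yy. (g yy $ i * g yy $ j) * p_obs yy yhat \<partial>M)
       in Jm t = (1 - \<gamma> t) *\<^sub>R J + \<gamma> t *\<^sub>R Fish
          \<and> s t = s_pred + \<eta> t *\<^sub>R (matrix_inv (Jm t) *v g (y t)))"
proof -
  interpret invertible_dynamics f u
    using diffeo by (rule invertible_dynamics_if_diffeomorphism)
  have d_loglik: "(\<lambda>x. ln (p_obs yy (h x (u t)))) differentiable at x" if "yy \<in> space M" for yy t x
    by (rule differentiable_ln_expfam_comp[OF expfam p_smooth[OF that] that h_smooth h_range])
  have next_iterate: "\<exists>\<theta> J. vth (Suc m) = chart_inv f u (Suc m) \<theta> \<and> Jt_seq (Suc m) = tensor_of_chart (Suc m) J" for m
    using step[of "Suc m"] by (simp add: Let_def) blast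
  have traj: "vth m \<in> traj_set f u" for m
    using init_pt next_iterate chart_inv_in_traj_set by (cases m) metis+
  have bilinear_chart: "bilinear (\<lambda>a b. Jt_seq m (tlift f u (vth m) m a) (tlift f u (vth m) m b))" for m
    using init_tensor next_iterate bilinear_tensor_of_chart unfolding is_tensor_at_def by (cases m) metis+
  show ?thesis
  proof (intro allI impI, goal_cases)
    case (1 t)
    then obtain m where t: "t = Suc m" by (cases t) auto
    have pred: "vth m (Suc m) = f (vth m m) (u (Suc m))" by (rule traj_step[OF traj])
    have score: "chart_covec f u (Suc m) (vth m) (mdiff f u (\<lambda>\<sigma>. ln (p_obs yy (h (\<sigma> (Suc m)) (u (Suc m))))) (vth m))
        = grad (\<lambda>x. ln (p_obs yy (h x (u (Suc m))))) (f (vth m m) (u (Suc m)))" if "yy \<in> space M" for yy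
      using chart_covec_mdiff[OF traj d_loglik[OF that]] pred by simp
    show ?case
      using step[of t] unfolding t Let_def diff_Suc_1
      by (simp add: chart_tensor_Suc[OF traj bilinear_chart] chart_tensor_fisher[OF score] score[OF obs]
          pred state_jacobian_def)
  qed
qed

end
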